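(* Let $I=(\mathcal{M},[N],(d_i)_{i\in[N]})$ be a non-positive instance with $\mathcal{M}\ne\emptyset$, and let $(S_1,\ldots,S_N)$ be the allocation produced by the round-robin protocol in which agents pick in the order $1,2,\dots,N,1,2,\dots,N,\dots$ and at her turn agent $i$ receives an unallocated item $j$ maximizing $d_i(j)$ (i.e. of least disutility; ties broken arbitrarily), until all items are allocated. Then for all $i\in[N]$, $$d_i(S_i)\ge\Big(2-\frac1N\Big)\cdot MmS_{d_i}^N(\mathcal{M}),$$ and the constant $2-\frac1N$ cannot be improved in general: for every $N\ge 1$ there is a non-positive instance with $N$ agents where equality holds for some agent with $MmS_{d_i}^N(\mathcal{M})<0$.
   Context: A non-positive instance: finite item set $\mathcal{M}$, agents $[N]=\{1,\dots,N\}$, additive utilities $d_i$ with $d_i(j)\le0$ for all items (chores). $\Pi_N(\mathcal{M})$ is the set of ordered $N$-partitions of $\mathcal{M}$ (parts may be empty); $MmS_{d}^N(\mathcal{M}):=\max_{(T_1,\ldots,T_N)\in\Pi_N(\mathcal{M})}\min_{j} d(T_j)$. *)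

theory Defs
  imports Complex_Main
begin

text \<open>Agents are 1..N. An ordered N-partition of M is a map T from agents to bundles,
  pairwise disjoint on 1..N and covering M (bundles may be empty).\<close>
definition is_partition :: "nat \<Rightarrow> 'a set \<Rightarrow> (nat \<Rightarrow> 'a set) \<Rightarrow> bool" where
  "is_partition N M T \<longleftrightarrow>
     (\<Union>j\<in>{1..N}. T j) = M \<and>
     (\<forall>j\<in>{1..N}. \<forall>k\<in>{1..N}. j \<noteq> k \<longrightarrow> T j \<inter> T k = {})"

definition MmS :: "('a \<Rightarrow> real) \<Rightarrow> nat \<Rightarrow> 'a set \<Rightarrow> real" where
  "MmS d N M = Max {Min ((\<lambda>j. sum d (T j)) ` {1..N}) | T. is_partition N M T}"

text \<open>A (complete) execution of the round-robin protocol: ps lists the items in the order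
  they are picked; the item picked at step t (0-based) goes to agent (t mod N) + 1, and it is
  an item maximizing that agent's utility among the items still unallocated (ties arbitrary).\<close>
definition rr_execution :: "nat \<Rightarrow> (nat \<Rightarrow> 'a \<Rightarrow> real) \<Rightarrow> 'a set \<Rightarrow> 'a list \<Rightarrow> bool" where
  "rr_execution N d M ps \<longleftrightarrow>
     distinct ps \<and> set ps = M \<and>
     (\<forall>t<length ps. \<forall>j\<in>M - set (take t ps). d (t mod N + 1) j \<le> d (t mod N + 1) (ps ! t))"

definition rr_bundle :: "nat \<Rightarrow> 'a list \<Rightarrow> nat \<Rightarrow> 'a set" where
  "rr_bundle N ps i = {ps ! t | t. t < length ps \<and> t mod N + 1 = i}"

end

theory Submission
  imports Defs "HOL-Library.FuncSet"
begin

text \<open>Agent \<open>i\<close> picks at steps \<open>i - 1, i - 1 + N, \<dots>, i - 1 + q N\<close>. By greedy choice each of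
  her picks is worth at least as much to her as every item picked later, in particular as the \<open>N\<close>
  items picked before her next turn; since all values are nonpositive, \<open>d\<^sub>i(M)\<close> is at most \<open>N\<close> times
  the value of her first \<open>q\<close> picks plus the value of her last pick. Together with
  \<open>N \<cdot> MmS \<le> d\<^sub>i(M)\<close> and \<open>MmS \<le> d\<^sub>i(j)\<close> for every single chore \<open>j\<close> this gives
  \<open>(2N - 1) MmS \<le> N d\<^sub>i(S\<^sub>i)\<close>. Equality holds for \<open>N(N - 1)\<close> unit chores followed by one chore of
  disutility \<open>N\<close>: the maximin share is \<open>-N\<close> (blocks of \<open>N\<close> unit chores, the big chore alone), while
  the first agent receives \<open>N - 1\<close> unit chores and the big one.\<close>

abbreviation min_bundle_value :: "('a \<Rightarrow> real) \<Rightarrow> nat \<Rightarrow> (nat \<Rightarrow> 'a set) \<Rightarrow> real" where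
  "min_bundle_value d N T \<equiv> Min ((\<lambda>j. sum d (T j)) ` {1..N})"

lemma is_partition_subset: "is_partition N M T \<Longrightarrow> j \<in> {1..N} \<Longrightarrow> T j \<subseteq> M"
  unfolding is_partition_def by blast

lemma is_partition_by_label:
  assumes "\<forall>x\<in>M. g x \<in> {1..N}"
  shows "is_partition N M (\<lambda>k. {x\<in>M. g x = k})"
  using assms unfolding is_partition_def by auto

lemma finite_partition_values:
  assumes "finite M"
  shows "finite {min_bundle_value d N T | T. is_partition N M T}"
proof -
  have "{min_bundle_value d N T | T. is_partition N M T}
          \<subseteq> (\<lambda>T. min_bundle_value d N T) ` ({1..N} \<rightarrow>\<^sub>E Pow M)"
  proof
    fix v assume "v \<in> {min_bundle_value d N T | T. is_partition N M T}"
    then obtain T where T: "is_partition N M T" "v = min_bundle_value d N T" by blast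
    have "restrict T {1..N} \<in> {1..N} \<rightarrow>\<^sub>E Pow M"
      using is_partition_subset[OF T(1)] by auto
    moreover have "min_bundle_value d N (restrict T {1..N}) = v"
      using T(2) by (metis (no_types, lifting) image_cong restrict_apply')
    ultimately show "v \<in> (\<lambda>T. min_bundle_value d N T) ` ({1..N} \<rightarrow>\<^sub>E Pow M)" by blast
  qed
  moreover have "finite ({1..N} \<rightarrow>\<^sub>E Pow M)" using assms by (simp add: finite_PiE)
  ultimately show ?thesis by (meson finite_imageI finite_subset)
qed

lemma MmS_attained:
  assumes "finite M" "N \<ge> 1"
  obtains T where "is_partition N M T" "MmS d N M = min_bundle_value d N T"
proof -
  have "is_partition N M (\<lambda>j. if j = 1 then M else {})"
    using assms(2) unfolding is_partition_def by (auto intro!: bexI[of _ 1])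
  then have "{min_bundle_value d N T | T. is_partition N M T} \<noteq> {}" by blast
  from Max_in[OF finite_partition_values[OF assms(1)] this] show ?thesis
    using that unfolding MmS_def by blast
qed

lemma min_bundle_value_le_MmS:
  assumes "finite M" "is_partition N M T"
  shows "min_bundle_value d N T \<le> MmS d N M"
  unfolding MmS_def using finite_partition_values[OF assms(1)] assms(2) by (intro Max_ge) auto

lemma MmS_mult_le_sum:
  assumes "finite M" "N \<ge> 1"
  shows "real N * MmS d N M \<le> sum d M"
proof -
  obtain T where T: "is_partition N M T" "MmS d N M = min_bundle_value d N T"
    using MmS_attained[OF assms] .
  have "\<forall>j\<in>{1..N}. finite (T j)"
    using is_partition_subset[OF T(1)] assms(1) finite_subset by blast
  then have "sum d M = (\<Sum>j\<in>{1..N}. sum d (T j))"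
    using T(1) unfolding is_partition_def by (auto intro!: sum.UNION_disjoint)
  moreover have "real (card {1..N}) * min_bundle_value d N T \<le> (\<Sum>j\<in>{1..N}. sum d (T j))"
    by (intro sum_bounded_below) auto
  ultimately show ?thesis using T(2) by simp
qed

lemma MmS_le_item:
  assumes "finite M" "N \<ge> 1" "\<forall>j\<in>M. d j \<le> 0" "x \<in> M"
  shows "MmS d N M \<le> d x"
proof -
  obtain T where T: "is_partition N M T" "MmS d N M = min_bundle_value d N T"
    using MmS_attained[OF assms(1,2)] .
  obtain k where k: "k \<in> {1..N}" "x \<in> T k" using T(1) assms(4) unfolding is_partition_def by blast
  have sub: "T k \<subseteq> M" using is_partition_subset[OF T(1) k(1)] .
  have "min_bundle_value d N T \<le> sum d (T k)" using k(1) by (intro Min_le) auto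
  also have "\<dots> = d x + sum d (T k - {x})"
    using k(2) sub assms(1) by (simp add: sum.remove finite_subset)
  also have "\<dots> \<le> d x" using sub assms(3) by (auto intro: sum_nonpos)
  finally show ?thesis using T(2) by simp
qed

lemma rr_execution_pick_dominates:
  assumes "rr_execution N d M ps" "t \<le> s" "s < length ps"
  shows "d (t mod N + 1) (ps ! s) \<le> d (t mod N + 1) (ps ! t)"
proof -
  have dist: "distinct ps" and M: "set ps = M"
    and greedy: "\<forall>j\<in>M - set (take t ps). d (t mod N + 1) j \<le> d (t mod N + 1) (ps ! t)"
    using assms unfolding rr_execution_def by auto
  have "ps ! s \<notin> set (take t ps)"
  proof
    assume "ps ! s \<in> set (take t ps)"
    then obtain u where "u < t" "ps ! u = ps ! s" using assms(3)
      by (auto simp: in_set_conv_nth)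
    then show False using dist assms(2,3) by (simp add: nth_eq_iff_index_eq)
  qed
  then show ?thesis using greedy M assms(3) by auto
qed

lemma sum_rr_bundle:
  assumes "distinct ps" "i \<in> {1..N}"
  shows "sum g (rr_bundle N ps i) = (\<Sum>k | i - 1 + k*N < length ps. g (ps ! (i - 1 + k*N)))"
proof -
  have turn: "t mod N + 1 = i \<longleftrightarrow> (\<exists>k. t = i - 1 + k*N)" for t
  proof
    assume "t mod N + 1 = i"
    then have "t = i - 1 + t div N * N" using div_mult_mod_eq[of t N] by linarith
    then show "\<exists>k. t = i - 1 + k*N" by blast
  next
    assume "\<exists>k. t = i - 1 + k*N"
    then obtain k where "t = i - 1 + k*N" by blast
    then have "t mod N = (i - 1) mod N" by (simp only: mod_mult_self1)
    also have "\<dots> = i - 1" using assms(2) by (intro mod_less) auto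
    finally show "t mod N + 1 = i" using assms(2) by simp
  qed
  have "rr_bundle N ps i = (\<lambda>k. ps ! (i - 1 + k*N)) ` {k. i - 1 + k*N < length ps}"
    unfolding rr_bundle_def turn by blast
  moreover have "inj_on (\<lambda>k. ps ! (i - 1 + k*N)) {k. i - 1 + k*N < length ps}"
  proof (rule inj_onI)
    fix k l assume "k \<in> {k. i - 1 + k*N < length ps}" "l \<in> {k. i - 1 + k*N < length ps}"
      and "ps ! (i - 1 + k*N) = ps ! (i - 1 + l*N)"
    then have "i - 1 + k*N = i - 1 + l*N" using assms(1) by (simp add: nth_eq_iff_index_eq)
    then show "k = l" using assms(2) by simp
  qed
  ultimately show ?thesis by (simp add: sum.reindex)
qed

lemma rr_execution_if_sorted:
  assumes "distinct ps" "set ps = M" "\<And>i. sorted_wrt (\<lambda>x y. d i y \<le> d i x) ps"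
  shows "rr_execution N d M ps"
  unfolding rr_execution_def
proof (intro conjI allI impI ballI)
  fix t j assume t: "t < length ps" and j: "j \<in> M - set (take t ps)"
  then obtain s where s: "s < length ps" "j = ps ! s" using assms(2) by (auto simp: in_set_conv_nth)
  have "t \<le> s"
  proof (rule ccontr)
    assume "\<not> t \<le> s"
    then have "j \<in> set (take t ps)" using s by (auto simp: in_set_conv_nth intro!: exI[of _ s])
    then show False using j by simp
  qed
  then show "d (t mod N + 1) j \<le> d (t mod N + 1) (ps ! t)"
    using assms(3)[of "t mod N + 1"] s by (cases "t = s") (auto simp: sorted_wrt_iff_nth_less)
qed (use assms in auto)

lemma sum_atLeastLessThan_blocks:
  fixes F :: "nat \<Rightarrow> 'b::comm_monoid_add"
  shows "(\<Sum>s\<in>{a..<a+q*N}. F s) = (\<Sum>k<q. \<Sum>j<N. F (a + k*N + j))"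
proof (induction q)
  case (Suc q)
  have "(\<Sum>s\<in>{a..<a+Suc q*N}. F s) = (\<Sum>s\<in>{a..<a+q*N}. F s) + (\<Sum>s\<in>{a+q*N..<a+q*N+N}. F s)"
    using sum.atLeastLessThan_concat[of a "a+q*N" "a+q*N+N" F] by (simp add: add.assoc add.commute[of N])
  also have "(\<Sum>s\<in>{a+q*N..<a+q*N+N}. F s) = (\<Sum>j<N. F (a+q*N+j))"
    using sum.shift_bounds_nat_ivl[of F 0 "a+q*N" N] by (simp add: add.commute atLeast0LessThan)
  finally show ?case using Suc by simp
qed simp

lemma sum_le_greedy_picks:
  fixes f :: "nat \<Rightarrow> real"
  assumes last: "a + q*N < m"
    and nonpos: "\<And>s. s < m \<Longrightarrow> f s \<le> 0"
    and dominates: "\<And>k s. a + k*N \<le> s \<Longrightarrow> s < m \<Longrightarrow> f s \<le> f (a + k*N)"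
  shows "(\<Sum>s<m. f s) \<le> real N * (\<Sum>k<q. f (a + k*N)) + f (a + q*N)"
proof -
  have sub: "{a..a+q*N} \<subseteq> {..<m}" using last by auto
  have "(\<Sum>s<m. f s) = (\<Sum>s\<in>{..<m} - {a..a+q*N}. f s) + (\<Sum>s\<in>{a..a+q*N}. f s)"
    using sum.subset_diff[OF sub] by simp
  also have "\<dots> \<le> (\<Sum>s\<in>{a..a+q*N}. f s)" using nonpos by (auto intro: sum_nonpos)
  also have "\<dots> = (\<Sum>k<q. \<Sum>j<N. f (a + k*N + j)) + f (a + q*N)"
    by (simp add: atLeastLessThanSuc_atLeastAtMost[symmetric] sum_atLeastLessThan_blocks)
  also have "(\<Sum>k<q. \<Sum>j<N. f (a + k*N + j)) \<le> (\<Sum>k<q. real N * f (a + k*N))"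
  proof (intro sum_mono)
    fix k assume "k \<in> {..<q}"
    have "a + k*N + j < m" if "j < N" for j
    proof -
      have "a + k*N + j < a + Suc k * N" using that by simp
      also have "\<dots> \<le> a + q*N" using \<open>k \<in> {..<q}\<close> mult_le_mono1[of "Suc k" q N] by simp
      finally show ?thesis using last by linarith
    qed
    then show "(\<Sum>j<N. f (a + k*N + j)) \<le> real N * f (a + k*N)"
      using sum_bounded_above[of "{..<N}" "\<lambda>j. f (a + k*N + j)" "f (a + k*N)"] dominates by simp
  qed
  finally show ?thesis by (simp add: sum_distrib_left)
qed

lemma pick_times_eq_atMost:
  fixes a N m :: nat
  assumes "N \<ge> 1" "{k. a + k*N < m} \<noteq> {}"
  obtains q where "{k. a + k*N < m} = {..q}"
proof
  let ?K = "{k. a + k*N < m}"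
  have "?K \<subseteq> {..<m}"
  proof
    fix k assume "k \<in> ?K"
    moreover have "k * 1 \<le> a + k*N" using mult_le_mono2[OF assms(1)] by (rule trans_le_add2)
    ultimately show "k \<in> {..<m}" by simp
  qed
  then have "finite ?K" by (rule finite_subset) simp
  show "?K = {..Max ?K}"
  proof
    show "?K \<subseteq> {..Max ?K}" using Max_ge[OF \<open>finite ?K\<close>] by auto
    show "{..Max ?K} \<subseteq> ?K"
    proof
      fix k assume "k \<in> {..Max ?K}"
      then have "a + k*N \<le> a + Max ?K * N" by (simp add: mult_le_mono1)
      also have "\<dots> < m" using Max_in[OF \<open>finite ?K\<close> assms(2)] by simp
      finally show "k \<in> ?K" by simp
    qed
  qed
qed

lemma share_bound_arith:
  fixes \<mu> Q L :: real
  assumes "N \<ge> 1" "real N * \<mu> \<le> real N * Q + L" "\<mu> \<le> L"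
  shows "(2 - 1 / real N) * \<mu> \<le> Q + L"
proof -
  have "(real N - 1) * \<mu> \<le> (real N - 1) * L" using assms by (intro mult_left_mono) auto
  then have "(2 * real N - 1) * \<mu> \<le> real N * (Q + L)" using assms(2) by (simp add: algebra_simps)
  then show ?thesis using assms(1) by (simp add: field_simps)
qed

lemma rr_bundle_ge_MmS:
  assumes N: "N \<ge> 1" and fin: "finite M" and nonpos: "\<forall>j\<in>M. d i j \<le> 0"
    and rr: "rr_execution N d M ps" and i: "i \<in> {1..N}"
  shows "(2 - 1 / real N) * MmS (d i) N M \<le> sum (d i) (rr_bundle N ps i)"
proof -
  define a where "a = i - 1"
  define f where "f s = d i (ps ! s)" for s
  define \<mu> where "\<mu> = MmS (d i) N M"
  define K where "K = {k. a + k*N < length ps}"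
  have dist: "distinct ps" and set_ps: "set ps = M" using rr unfolding rr_execution_def by simp_all
  have f_nonpos: "f s \<le> 0" if "s < length ps" for s
    using nonpos nth_mem[OF that] unfolding f_def set_ps by blast
  have f_dominates: "f s \<le> f (a + k*N)" if "a + k*N \<le> s" "s < length ps" for k s
  proof -
    have "a < N" "a + 1 = i" using i unfolding a_def by auto
    then have "(a + k*N) mod N + 1 = i" by simp
    then show ?thesis using rr_execution_pick_dominates[OF rr that] unfolding f_def by simp
  qed
  have "sum (d i) M = (\<Sum>s<length ps. f s)"
    unfolding set_ps[symmetric] f_def using dist
    by (simp add: sum.distinct_set_conv_list sum_list_sum_nth atLeast0LessThan)
  then have avg: "real N * \<mu> \<le> (\<Sum>s<length ps. f s)"
    using MmS_mult_le_sum[OF fin N, where d = "d i"] unfolding \<mu>_def by linarith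
  have bundle_sum: "sum (d i) (rr_bundle N ps i) = (\<Sum>k\<in>K. f (a + k*N))"
    using sum_rr_bundle[OF dist i] unfolding K_def a_def f_def .
  show ?thesis
  proof (cases "K = {}")
    case True
    have "(\<Sum>s<length ps. f s) \<le> 0" using f_nonpos by (intro sum_nonpos) simp
    then have "real N * \<mu> \<le> 0" using avg by linarith
    then have "\<mu> \<le> 0" using N by (simp add: mult_le_0_iff)
    moreover have "0 \<le> 2 - 1 / real N" using N by (simp add: field_simps)
    ultimately show ?thesis using True bundle_sum unfolding \<mu>_def by (simp add: mult_nonneg_nonpos)
  next
    case False
    then obtain q where "K = {..q}" using pick_times_eq_atMost[OF N] unfolding K_def by blast
    then have "q \<in> K" by simp
    then have last: "a + q*N < length ps" unfolding K_def by simp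
    have S: "sum (d i) (rr_bundle N ps i) = (\<Sum>k<q. f (a + k*N)) + f (a + q*N)"
      using bundle_sum \<open>K = {..q}\<close> by (simp add: lessThan_Suc_atMost[symmetric])
    have "(\<Sum>s<length ps. f s) \<le> real N * (\<Sum>k<q. f (a + k*N)) + f (a + q*N)"
      using sum_le_greedy_picks[of a q N "length ps" f] last f_nonpos f_dominates by blast
    then have "real N * \<mu> \<le> real N * (\<Sum>k<q. f (a + k*N)) + f (a + q*N)"
      using avg by linarith
    moreover have "\<mu> \<le> f (a + q*N)"
      using MmS_le_item[OF fin N nonpos] nth_mem[OF last] unfolding \<mu>_def f_def set_ps by blast
    ultimately show ?thesis unfolding S \<mu>_def[symmetric] by (rule share_bound_arith[OF N])
  qed
qed

definition tight_utility :: "nat \<Rightarrow> nat \<Rightarrow> real" where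
  "tight_utility N j = (if j = N * (N - 1) then - real N else - 1)"

lemma tight_utility_antimono:
  assumes "x \<le> y" "y \<le> N * (N - 1)"
  shows "tight_utility N y \<le> tight_utility N x"
  using assms unfolding tight_utility_def by auto

lemma sum_tight_utility:
  "sum (tight_utility N) {0..N * (N - 1)} = - real N * real N"
proof -
  have "{0..N * (N - 1)} = insert (N * (N - 1)) {0..<N * (N - 1)}" by auto
  then have "sum (tight_utility N) {0..N * (N - 1)} = - real N - real (N * (N - 1))"
    by (simp add: tight_utility_def)
  then show ?thesis by (cases N) (simp_all add: algebra_simps)
qed

lemma tight_utility_block_ge:
  assumes "N \<ge> 1"
  shows "- real N \<le> sum (tight_utility N) {x \<in> {0..N * (N - 1)}. x div N = q}"
    (is "_ \<le> sum _ ?B")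
proof (cases "N * (N - 1) \<in> ?B")
  case True
  have "x = N * (N - 1)" if "x \<in> ?B" for x
  proof -
    have "x div N = N - 1" using that True by auto
    then have "N * (N - 1) \<le> x" using times_div_less_eq_dividend[of N x] by simp
    then show ?thesis using that by simp
  qed
  then have "?B = {N * (N - 1)}" using True by blast
  then show ?thesis by (simp add: tight_utility_def)
next
  case False
  have "?B \<subseteq> {q * N..<q * N + N}"
    using div_times_less_eq_dividend dividend_less_div_times assms
    by (auto simp: add.commute)
  then have "card ?B \<le> N" using card_mono[of "{q * N..<q * N + N}"] by fastforce
  moreover have "sum (tight_utility N) ?B = sum (\<lambda>_. - 1) ?B"
    using False by (intro sum.cong) (auto simp: tight_utility_def)
  ultimately show ?thesis by simp
qed

lemma MmS_tight_utility:
  assumes "N \<ge> 1"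
  shows "MmS (tight_utility N) N {0..N * (N - 1)} = - real N"
proof (rule antisym)
  let ?M = "{0..N * (N - 1)}"
  have "real N * MmS (tight_utility N) N ?M \<le> real N * (- real N)"
    using MmS_mult_le_sum[OF _ assms, of ?M "tight_utility N"] sum_tight_utility by simp
  then show "MmS (tight_utility N) N ?M \<le> - real N"
    by (rule mult_left_le_imp_le) (use assms in simp)
  define T where "T k = {x \<in> ?M. x div N + 1 = k}" for k
  have "x div N + 1 \<in> {1..N}" if "x \<in> ?M" for x
    using that div_le_mono[of x "N * (N - 1)" N] assms by auto
  then have part: "is_partition N ?M T"
    unfolding T_def by (intro is_partition_by_label) blast
  have "- real N \<le> sum (tight_utility N) (T k)" if "k \<in> {1..N}" for k
  proof -
    have "T k = {x \<in> ?M. x div N = k - 1}" using that unfolding T_def by auto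
    then show ?thesis using tight_utility_block_ge[OF assms] by simp
  qed
  then have "- real N \<le> min_bundle_value (tight_utility N) N T" using assms by simp
  then show "- real N \<le> MmS (tight_utility N) N ?M"
    using min_bundle_value_le_MmS[OF finite_atLeastAtMost part, of "tight_utility N"] by linarith
qed

lemma mult_less_Suc_mult_pred_iff:
  assumes "N \<ge> (1::nat)"
  shows "k * N < N * (N - 1) + 1 \<longleftrightarrow> k < N"
proof -
  have "k * N < N * (N - 1) + 1 \<longleftrightarrow> k * N \<le> (N - 1) * N"
    by (simp only: mult.commute[of N] Suc_eq_plus1[symmetric] less_Suc_eq_le)
  also have "\<dots> \<longleftrightarrow> k < N" using assms by auto
  finally show ?thesis .
qed

lemma rr_bundle_tight_utility:
  assumes "N \<ge> 1"
  shows "sum (tight_utility N) (rr_bundle N [0..<N * (N - 1) + 1] 1) = - (2 * real N - 1)"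
proof -
  obtain p where p: "N = Suc p" using assms by (cases N) auto
  note picks = mult_less_Suc_mult_pred_iff[OF assms]
  have "sum (tight_utility N) (rr_bundle N [0..<N * (N - 1) + 1] 1)
      = (\<Sum>k | k * N < N * (N - 1) + 1. tight_utility N ([0..<N * (N - 1) + 1] ! (k * N)))"
    using sum_rr_bundle[of "[0..<N * (N - 1) + 1]" 1 N] assms by (simp del: upt_Suc)
  also have "\<dots> = (\<Sum>k<N. tight_utility N (k * N))"
  proof (rule sum.cong)
    fix k assume "k \<in> {..<N}"
    then have "k * N < N * (N - 1) + 1" using picks by simp
    then show "tight_utility N ([0..<N * (N - 1) + 1] ! (k * N)) = tight_utility N (k * N)"
      by (simp del: upt_Suc)
  qed (use picks in auto)
  also have "\<dots> = (\<Sum>k<p. tight_utility N (k * N)) + tight_utility N (p * N)"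
    using p by simp
  also have "(\<Sum>k<p. tight_utility N (k * N)) = (\<Sum>k<p. - 1)"
  proof (rule sum.cong)
    fix k assume "k \<in> {..<p}"
    then have "k * N < p * N" using p by (intro mult_less_mono1) auto
    then have "k * N \<noteq> N * (N - 1)" using p by (simp add: mult.commute)
    then show "tight_utility N (k * N) = - 1" by (simp add: tight_utility_def)
  qed simp
  also have "(\<Sum>k<p. - 1) + tight_utility N (p * N) = - real p - real N"
    using p by (simp add: tight_utility_def mult.commute)
  also have "\<dots> = - (2 * real N - 1)"
    using p by simp
  finally show ?thesis .
qed

lemma rr_execution_tight_utility:
  assumes "N \<ge> 1"
  shows "rr_execution N (\<lambda>_. tight_utility N) {0..N * (N - 1)} [0..<N * (N - 1) + 1]"
proof (rule rr_execution_if_sorted)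
  show "sorted_wrt (\<lambda>x y. tight_utility N y \<le> tight_utility N x) [0..<N * (N - 1) + 1]"
    by (rule sorted_wrt_mono_rel[OF _ sorted_wrt_upt]) (auto intro: tight_utility_antimono)
qed auto

theorem theorem1:
  shows "(\<forall>(N::nat) (M::'a set) (d::nat \<Rightarrow> 'a \<Rightarrow> real) ps.
            N \<ge> 1 \<and> finite M \<and> M \<noteq> {} \<and> (\<forall>i\<in>{1..N}. \<forall>j\<in>M. d i j \<le> 0) \<and>
            rr_execution N d M ps \<longrightarrow>
            (\<forall>i\<in>{1..N}. sum (d i) (rr_bundle N ps i) \<ge> (2 - 1 / real N) * MmS (d i) N M))
       \<and> (\<forall>N::nat. N \<ge> 1 \<longrightarrow>
            (\<exists>(M::nat set) (d::nat \<Rightarrow> nat \<Rightarrow> real) ps i.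
               finite M \<and> M \<noteq> {} \<and> (\<forall>i\<in>{1..N}. \<forall>j\<in>M. d i j \<le> 0) \<and>
               rr_execution N d M ps \<and> i \<in> {1..N} \<and> MmS (d i) N M < 0 \<and>
               sum (d i) (rr_bundle N ps i) = (2 - 1 / real N) * MmS (d i) N M))"
proof (intro conjI allI impI ballI)
  fix N :: nat and M :: "'a set" and d :: "nat \<Rightarrow> 'a \<Rightarrow> real" and ps i
  assume "N \<ge> 1 \<and> finite M \<and> M \<noteq> {} \<and> (\<forall>i\<in>{1..N}. \<forall>j\<in>M. d i j \<le> 0) \<and>
    rr_execution N d M ps" and "i \<in> {1..N}"
  then show "(2 - 1 / real N) * MmS (d i) N M \<le> sum (d i) (rr_bundle N ps i)"
    by (intro rr_bundle_ge_MmS) auto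
next
  fix N :: nat assume N: "N \<ge> 1"
  have "(2 - 1 / real N) * MmS (tight_utility N) N {0..N * (N - 1)} = - (2 * real N - 1)"
    unfolding MmS_tight_utility[OF N] using N by (simp add: field_simps)
  then show "\<exists>(M::nat set) (d::nat \<Rightarrow> nat \<Rightarrow> real) ps i.
      finite M \<and> M \<noteq> {} \<and> (\<forall>i\<in>{1..N}. \<forall>j\<in>M. d i j \<le> 0) \<and>
      rr_execution N d M ps \<and> i \<in> {1..N} \<and> MmS (d i) N M < 0 \<and>
      sum (d i) (rr_bundle N ps i) = (2 - 1 / real N) * MmS (d i) N M"
    using N MmS_tight_utility[OF N] rr_bundle_tight_utility[OF N] rr_execution_tight_utility[OF N]
    by (intro exI[of _ "{0..N * (N - 1)}"] exI[of _ "\<lambda>_. tight_utility N"]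
        exI[of _ "[0..<N * (N - 1) + 1]"] exI[of _ 1]) (auto simp: tight_utility_def)
qed

end
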